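(* Let $N,M$ be positive integers, let $\mathscr{A}\subset\mathscr{M}(N,M)$ and $\mathscr{B}\subset\mathscr{M}(M,N)$ be finite sets of real matrices, and let $\|\cdot\|$ be a submultiplicative norm on $\mathscr{M}(N,N)$. Suppose there is a periodic sequence $\{\bar B_n\}_{n\ge1}$ with $\bar B_n\in\mathscr{B}$ such that $\|A_n\bar B_n\cdots A_1\bar B_1\|\to0$ as $n\to\infty$ for every sequence $\{A_n\}_{n\ge1}$ with $A_n\in\mathscr{A}$. Then there exist constants $C>0$ and $\lambda\in(0,1)$ such that \[ \|A_n\bar B_n\cdots A_1\bar B_1\|\le C\lambda^n,\qquad n=1,2,\ldots, \] for every sequence $\{A_n\in\mathscr{A}\}$.
   Context: $\mathscr{M}(p,q)$ denotes the space of $p\times q$ real matrices with the topology of elementwise convergence. A norm on $\mathscr{M}(N,N)$ is submultiplicative if $\|XY\|\le\|X\|\,\|Y\|$ for all $X,Y$. *)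

theory Defs
  imports "HOL-Analysis.Analysis"
begin

definition is_matrix_norm :: "(real^'n^'n \<Rightarrow> real) \<Rightarrow> bool" where
  "is_matrix_norm nrm \<longleftrightarrow>
     (\<forall>X. 0 \<le> nrm X) \<and> (\<forall>X. nrm X = 0 \<longleftrightarrow> X = 0) \<and>
     (\<forall>c X. nrm (c *\<^sub>R X) = \<bar>c\<bar> * nrm X) \<and>
     (\<forall>X Y. nrm (X + Y) \<le> nrm X + nrm Y)"

definition submultiplicative :: "(real^'n^'n \<Rightarrow> real) \<Rightarrow> bool" where
  "submultiplicative nrm \<longleftrightarrow> (\<forall>X Y. nrm (X ** Y) \<le> nrm X * nrm Y)"

text \<open>prodAB A B n = A_n B_n ... A_1 B_1 (sequences indexed from 1; empty product = identity).\<close>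
fun prodAB :: "(nat \<Rightarrow> real^'m^'n) \<Rightarrow> (nat \<Rightarrow> real^'n^'m) \<Rightarrow> nat \<Rightarrow> real^'n^'n" where
  "prodAB A B 0 = mat 1"
| "prodAB A B (Suc n) = (A (Suc n) ** B (Suc n)) ** prodAB A B n"

end

theory Submission
  imports Defs
begin

text \<open>By Koenig's lemma on the finite alphabet \<open>\<A>\<close>, the convergence of all products to 0
  is uniform: there is an \<open>L\<close> such that every product drops below 1/2 at some multiple of
  the period of \<open>Bbar\<close> not exceeding \<open>L\<close>. At such a time the product splits, by periodicity,
  into a factor of norm at most 1/2 and a shifted product of the same kind, so the norm is
  halved at least every \<open>L\<close> steps, which is geometric decay.\<close>

lemma prodAB_cong:
  assumes "\<And>k. 1 \<le> k \<Longrightarrow> k \<le> n \<Longrightarrow> A k = A' k"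
    and "\<And>k. 1 \<le> k \<Longrightarrow> k \<le> n \<Longrightarrow> B k = B' k"
  shows "prodAB A B n = prodAB A' B' n"
  using assms by (induction n) auto

lemma prodAB_add:
  "prodAB A B (n + m) = prodAB (\<lambda>k. A (k + m)) (\<lambda>k. B (k + m)) n ** prodAB A B m"
  by (induction n) (simp_all add: matrix_mul_assoc)

lemma periodic_add_multiple:
  fixes n p j :: nat
  assumes "\<forall>n\<ge>1. B (n + p) = B n" and "1 \<le> n"
  shows "B (n + j * p) = B n"
proof (induction j)
  case (Suc j)
  have "B (n + Suc j * p) = B ((n + j * p) + p)" by (simp add: algebra_simps)
  also have "\<dots> = B (n + j * p)" using assms by simp
  finally show ?case using Suc by simp
qed simp

lemma prodAB_add_period:
  assumes "\<forall>n\<ge>1. B (n + p) = B n" and "p dvd m"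
  shows "prodAB A B (n + m) = prodAB (\<lambda>k. A (k + m)) B n ** prodAB A B m"
proof -
  obtain j where m: "m = j * p" using assms(2) by (metis dvd_def mult.commute)
  have "prodAB (\<lambda>k. A (k + m)) (\<lambda>k. B (k + m)) n = prodAB (\<lambda>k. A (k + m)) B n"
    by (rule prodAB_cong) (simp_all add: m periodic_add_multiple[OF assms(1)])
  then show ?thesis by (simp add: prodAB_add)
qed

lemma prodAB_norm_le_power:
  fixes nrm :: "real^'n^'n \<Rightarrow> real"
  assumes "submultiplicative nrm" and "\<And>X. 0 \<le> nrm X" and "0 \<le> c"
    and "\<And>k. 1 \<le> k \<Longrightarrow> k \<le> n \<Longrightarrow> nrm (A k ** B k) \<le> c"
  shows "nrm (prodAB A B n) \<le> nrm (mat 1) * c ^ n"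
  using assms(4)
proof (induction n)
  case (Suc n)
  have "nrm (prodAB A B (Suc n)) \<le> nrm (A (Suc n) ** B (Suc n)) * nrm (prodAB A B n)"
    using assms(1) by (simp add: submultiplicative_def)
  also have "\<dots> \<le> c * (nrm (mat 1) * c ^ n)"
    using Suc assms(2,3) by (intro mult_mono) auto
  finally show ?case by (simp add: algebra_simps)
qed simp

lemma prodAB_norm_le_shift:
  fixes nrm :: "real^'n^'n \<Rightarrow> real"
  assumes "submultiplicative nrm" and "\<And>X. 0 \<le> nrm X"
    and "\<forall>n\<ge>1. B (n + p) = B n" and "p dvd m" and "m \<le> n"
    and "nrm (prodAB A B m) \<le> r"
  shows "nrm (prodAB A B n) \<le> nrm (prodAB (\<lambda>k. A (k + m)) B (n - m)) * r"
proof -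
  have "prodAB A B n = prodAB (\<lambda>k. A (k + m)) B (n - m) ** prodAB A B m"
    using prodAB_add_period[OF assms(3,4), of A "n - m"] assms(5) by simp
  then have "nrm (prodAB A B n) \<le> nrm (prodAB (\<lambda>k. A (k + m)) B (n - m)) * nrm (prodAB A B m)"
    using assms(1) by (simp add: submultiplicative_def)
  also have "\<dots> \<le> nrm (prodAB (\<lambda>k. A (k + m)) B (n - m)) * r"
    using assms(2,6) by (intro mult_left_mono) auto
  finally show ?thesis .
qed

lemma finite_bounded_above_by_one:
  fixes f :: "'a \<Rightarrow> real"
  assumes "finite X"
  shows "\<exists>c\<ge>1. \<forall>x\<in>X. f x \<le> c"
proof (intro exI[of _ "Max (insert 1 (f ` X))"] conjI ballI)
  have fin: "finite (insert 1 (f ` X))" using assms by simp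
  show "1 \<le> Max (insert 1 (f ` X))" by (rule Max_ge[OF fin]) simp
  show "f x \<le> Max (insert 1 (f ` X))" if "x \<in> X" for x
    by (rule Max_ge[OF fin]) (simp add: that)
qed

text \<open>The prefixes admitting arbitrarily late first witnesses form a finitely branching
  infinite tree; an infinite branch would be a word without any witness.\<close>
lemma uniform_witness_over_finite_alphabet:
  fixes S :: "'a set" and Q :: "(nat \<Rightarrow> 'a) \<Rightarrow> nat \<Rightarrow> bool"
  assumes fin: "finite S"
    and witness: "\<And>A. \<forall>n\<ge>1. A n \<in> S \<Longrightarrow> \<exists>j\<ge>1. Q A j"
    and prefix: "\<And>A A' j. \<forall>k\<in>{1..j}. A k = A' k \<Longrightarrow> Q A j \<longleftrightarrow> Q A' j"
  shows "\<exists>L. \<forall>A. (\<forall>n\<ge>1. A n \<in> S) \<longrightarrow> (\<exists>j\<in>{1..L}. Q A j)"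
proof (rule ccontr)
  define caught where "caught m w \<longleftrightarrow> (\<exists>L. \<forall>A. (\<forall>n\<ge>1. A n \<in> S) \<and> (\<forall>k\<in>{1..m}. A k = w k)
      \<longrightarrow> (\<exists>j\<in>{1..L}. Q A j))" for m and w :: "nat \<Rightarrow> 'a"
  assume "\<not> ?thesis"
  then have root: "\<not> caught 0 w" for w
    unfolding caught_def by simp
  have extend: "\<exists>a\<in>S. \<not> caught (Suc m) (w(Suc m := a))" if "\<not> caught m w" for m w
  proof (rule ccontr)
    assume "\<not> ?thesis"
    then obtain Lf where Lf: "\<forall>a\<in>S. \<forall>A. (\<forall>n\<ge>1. A n \<in> S) \<and> (\<forall>k\<in>{1..Suc m}. A k = (w(Suc m := a)) k)
        \<longrightarrow> (\<exists>j\<in>{1..Lf a}. Q A j)"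
      unfolding caught_def by metis
    have "caught m w"
      unfolding caught_def
    proof (intro exI allI impI)
      fix A assume A: "(\<forall>n\<ge>1. A n \<in> S) \<and> (\<forall>k\<in>{1..m}. A k = w k)"
      then have a: "A (Suc m) \<in> S" by simp
      have "\<forall>k\<in>{1..Suc m}. A k = (w(Suc m := A (Suc m))) k"
        using A by (auto simp: le_Suc_eq)
      then obtain j where "j \<in> {1..Lf (A (Suc m))}" "Q A j"
        using Lf a A by blast
      moreover have "Lf (A (Suc m)) \<le> (\<Sum>a\<in>S. Lf a)"
        using fin a by (intro member_le_sum) auto
      ultimately show "\<exists>j\<in>{1..\<Sum>a\<in>S. Lf a}. Q A j" by auto
    qed
    with that show False ..
  qed
  have "\<exists>f. \<forall>n. \<not> caught n (f n) \<and> (\<exists>a\<in>S. f (Suc n) = (f n)(Suc n := a))"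
    by (rule dependent_nat_choice) (use root extend in blast)+
  then obtain f where f: "\<And>n. \<not> caught n (f n)" and f_step: "\<And>n. \<exists>a\<in>S. f (Suc n) = (f n)(Suc n := a)"
    by blast
  define A where "A n = f n n" for n
  have f_prefix: "f m k = A k" if "1 \<le> k" "k \<le> m" for m k
    using that
  proof (induction m)
    case (Suc m)
    then show ?case
      using f_step[of m] by (cases "k = Suc m") (auto simp: A_def)
  qed simp
  have "\<forall>n\<ge>1. A n \<in> S"
  proof (intro allI impI)
    fix n :: nat assume "1 \<le> n"
    then obtain n' where "n = Suc n'" by (cases n) auto
    then show "A n \<in> S" using f_step[of n'] by (auto simp: A_def)
  qed
  then obtain j where "j \<ge> 1" "Q A j" using witness by blast
  obtain A' where agree: "\<forall>k\<in>{1..j}. A' k = f j k" and none: "\<forall>i\<in>{1..j}. \<not> Q A' i"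
    using f[of j] unfolding caught_def by blast
  have "\<forall>k\<in>{1..j}. A k = A' k"
    using agree f_prefix by simp
  then have "Q A' j" using prefix \<open>Q A j\<close> by blast
  then show False using none \<open>j \<ge> 1\<close> by simp
qed

lemma geometric_decay_of_uniform_halving:
  fixes g :: "'a \<Rightarrow> nat \<Rightarrow> real"
  assumes "0 < K" and "0 < M"
    and initial: "\<And>x n. x \<in> F \<Longrightarrow> n \<le> K \<Longrightarrow> g x n \<le> M"
    and halving: "\<And>x. x \<in> F \<Longrightarrow> \<exists>m\<in>{1..K}. \<exists>y\<in>F. \<forall>n\<ge>m. g x n \<le> g y (n - m) / 2"
  shows "\<exists>C>0. \<exists>lam. 0 < lam \<and> lam < 1 \<and> (\<forall>x\<in>F. \<forall>n. g x n \<le> C * lam ^ n)"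
proof -
  define lam where "lam = root K (1/2)"
  have lam: "0 < lam" "lam < 1" and lam_K: "lam ^ K = 1/2"
    using \<open>0 < K\<close> by (auto simp: lam_def real_root_pow_pos2)
  have "g x n \<le> 2 * M * lam ^ n" if "x \<in> F" for x n
    using that
  proof (induction n arbitrary: x rule: less_induct)
    case (less n)
    show ?case
    proof (cases "n \<le> K")
      case True
      have "g x n \<le> 2 * M * lam ^ K" using initial[OF less.prems True] by (simp add: lam_K)
      also have "\<dots> \<le> 2 * M * lam ^ n"
        using True lam \<open>0 < M\<close> by (intro mult_left_mono power_decreasing) auto
      finally show ?thesis .
    next
      case False
      obtain m y where m: "1 \<le> m" "m \<le> K" and "y \<in> F" and y: "\<forall>n\<ge>m. g x n \<le> g y (n - m) / 2"
        using halving[OF less.prems] by auto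
      have "g x n \<le> g y (n - m) / 2" using y False m by simp
      also have "\<dots> \<le> 2 * M * lam ^ (n - m) * lam ^ K"
        using less.IH[of "n - m" y] \<open>y \<in> F\<close> m False by (simp add: lam_K)
      also have "\<dots> \<le> 2 * M * lam ^ (n - m) * lam ^ m"
        using m lam \<open>0 < M\<close> by (intro mult_left_mono power_decreasing) auto
      also have "\<dots> = 2 * M * lam ^ n"
        using False m by (simp add: mult.assoc flip: power_add)
      finally show ?thesis .
    qed
  qed
  then show ?thesis using lam \<open>0 < M\<close> by (intro exI[of _ "2 * M"]) auto
qed

lemma uniform_contraction_time:
  fixes \<A> :: "(real^'m^'n) set" and nrm :: "real^'n^'n \<Rightarrow> real"
  assumes "finite \<A>" and "0 < p" and "0 < \<epsilon>"
    and "\<forall>A. (\<forall>n\<ge>1. A n \<in> \<A>) \<longrightarrow> (\<lambda>n. nrm (prodAB A B n)) \<longlonglongrightarrow> 0"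
  shows "\<exists>L. \<forall>A. (\<forall>n\<ge>1. A n \<in> \<A>) \<longrightarrow> (\<exists>j\<in>{1..L}. p dvd j \<and> nrm (prodAB A B j) < \<epsilon>)"
proof (rule uniform_witness_over_finite_alphabet[OF assms(1)])
  fix A :: "nat \<Rightarrow> real^'m^'n" assume "\<forall>n\<ge>1. A n \<in> \<A>"
  then have "\<forall>\<^sub>F n in sequentially. nrm (prodAB A B n) < \<epsilon>"
    using assms(3,4) by (auto dest: order_tendstoD(2))
  then obtain N where N: "\<And>n. N \<le> n \<Longrightarrow> nrm (prodAB A B n) < \<epsilon>"
    unfolding eventually_sequentially by blast
  have "N \<le> Suc N * p" using \<open>0 < p\<close> mult_le_mono2[of 1 p "Suc N"] by simp
  then show "\<exists>j\<ge>1. p dvd j \<and> nrm (prodAB A B j) < \<epsilon>"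
    using N \<open>0 < p\<close> by (intro exI[of _ "Suc N * p"]) auto
next
  fix A A' :: "nat \<Rightarrow> real^'m^'n" and j
  assume "\<forall>k\<in>{1..j}. A k = A' k"
  then have "prodAB A B j = prodAB A' B j" by (intro prodAB_cong) auto
  then show "(p dvd j \<and> nrm (prodAB A B j) < \<epsilon>) \<longleftrightarrow> (p dvd j \<and> nrm (prodAB A' B j) < \<epsilon>)"
    by simp
qed

theorem theorem2:
  fixes \<A> :: "(real^'m^'n) set" and \<B> :: "(real^'n^'m) set"
    and nrm :: "real^'n^'n \<Rightarrow> real"
    and Bbar :: "nat \<Rightarrow> real^'n^'m"
  assumes "finite \<A>" and "finite \<B>"
    and "is_matrix_norm nrm" and "submultiplicative nrm"
    and "\<forall>n\<ge>1. Bbar n \<in> \<B>"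
    and "\<exists>p>0. \<forall>n\<ge>1. Bbar (n + p) = Bbar n"
    and "\<forall>A. (\<forall>n\<ge>1. A n \<in> \<A>) \<longrightarrow> (\<lambda>n. nrm (prodAB A Bbar n)) \<longlonglongrightarrow> 0"
  shows "\<exists>C>0. \<exists>lam. 0 < lam \<and> lam < 1 \<and>
           (\<forall>A. (\<forall>n\<ge>1. A n \<in> \<A>) \<longrightarrow> (\<forall>n\<ge>1. nrm (prodAB A Bbar n) \<le> C * lam ^ n))"
proof -
  obtain p where "0 < p" and period: "\<forall>n\<ge>1. Bbar (n + p) = Bbar n" using assms(6) by blast
  have nonneg: "\<And>X. 0 \<le> nrm X" using assms(3) by (simp add: is_matrix_norm_def)
  obtain c where "1 \<le> c" and factor: "\<forall>(a, b)\<in>\<A> \<times> \<B>. nrm (a ** b) \<le> c"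
    using finite_bounded_above_by_one[of "\<A> \<times> \<B>" "\<lambda>(a, b). nrm (a ** b)"] assms(1,2) by auto
  let ?seqs = "{A :: nat \<Rightarrow> real^'m^'n. \<forall>n\<ge>1. A n \<in> \<A>}"
  have "\<exists>L. \<forall>A. (\<forall>n\<ge>1. A n \<in> \<A>) \<longrightarrow> (\<exists>j\<in>{1..L}. p dvd j \<and> nrm (prodAB A Bbar j) < 1/2)"
    by (rule uniform_contraction_time[OF assms(1) \<open>0 < p\<close> _ assms(7)]) simp
  then obtain L where L: "\<And>A. A \<in> ?seqs \<Longrightarrow> \<exists>j\<in>{1..L}. p dvd j \<and> nrm (prodAB A Bbar j) < 1/2"
    by blast
  have "\<exists>C>0. \<exists>lam. 0 < lam \<and> lam < 1 \<and> (\<forall>A\<in>?seqs. \<forall>n. nrm (prodAB A Bbar n) \<le> C * lam ^ n)"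
  proof (rule geometric_decay_of_uniform_halving[where K = "Suc L" and M = "(nrm (mat 1) + 1) * c ^ Suc L"])
    show "0 < (nrm (mat 1) + 1) * c ^ Suc L" using nonneg[of "mat 1"] \<open>1 \<le> c\<close> by simp
  next
    fix A n assume "A \<in> ?seqs" and "n \<le> Suc L"
    then have "nrm (prodAB A Bbar n) \<le> nrm (mat 1) * c ^ n"
      using assms(4,5) nonneg \<open>1 \<le> c\<close> factor by (intro prodAB_norm_le_power) auto
    also have "\<dots> \<le> (nrm (mat 1) + 1) * c ^ Suc L"
      using \<open>n \<le> Suc L\<close> \<open>1 \<le> c\<close> nonneg by (intro mult_mono power_increasing) auto
    finally show "nrm (prodAB A Bbar n) \<le> (nrm (mat 1) + 1) * c ^ Suc L" .
  next
    fix A assume A: "A \<in> ?seqs"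
    then obtain m where m: "m \<in> {1..L}" "p dvd m" "nrm (prodAB A Bbar m) \<le> 1/2"
      using L by force
    then have "\<forall>n\<ge>m. nrm (prodAB A Bbar n) \<le> nrm (prodAB (\<lambda>k. A (k + m)) Bbar (n - m)) / 2"
      using prodAB_norm_le_shift[OF assms(4) nonneg period m(2) _ m(3)] by simp
    moreover have "(\<lambda>k. A (k + m)) \<in> ?seqs" using A by simp
    ultimately show "\<exists>m\<in>{1..Suc L}. \<exists>y\<in>?seqs. \<forall>n\<ge>m. nrm (prodAB A Bbar n) \<le> nrm (prodAB y Bbar (n - m)) / 2"
      using m(1) by (intro bexI[of _ m]) auto
  qed simp
  then show ?thesis by blast
qed

end
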